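(* Let $\mathbf{k}$ be a field and $\Delta$ a $(d-1)$-dimensional simplicial complex with $n$ vertices and upper skips $Q_0<\dots<Q_{d-1}$. Then $$f_{d-1}(\Delta)\le\frac{d}{Q_{d-1}(\Delta)}\binom{n}{d}.$$
   Context: A simplicial complex on $[n]$ is a family of subsets closed under subsets containing all singletons; $f_i$ counts faces of size $i+1$. With $M_i=\max\{|W|:W\subseteq[n],\ \tilde H_{|W|-i-1}(\Delta[W];\mathbf{k})\ne0\}$ (maximal shifts of the minimal free resolution of the Stanley–Reisner ring), $M_1<\dots<M_{n-d}$ lie in $\{2,\dots,n\}$ and the $d$ remaining elements of $[n]$ are the upper skips $Q_0=1<Q_1<\dots<Q_{d-1}$. *)

theory Defs
  imports Complex_Main
begin

definition simplicial_complex :: "nat \<Rightarrow> nat set set \<Rightarrow> bool" where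
  "simplicial_complex n K \<longleftrightarrow>
     K \<subseteq> Pow {1..n} \<and> (\<forall>F\<in>K. \<forall>G. G \<subseteq> F \<longrightarrow> G \<in> K) \<and>
     (\<forall>v\<in>{1..n}. {v} \<in> K) \<and> {} \<in> K"

definition fvec :: "nat set set \<Rightarrow> nat \<Rightarrow> nat" where
  "fvec K i = card {F\<in>K. card F = i + 1}"

definition induced :: "nat set set \<Rightarrow> nat set \<Rightarrow> nat set set" where
  "induced K W = {F\<in>K. F \<subseteq> W}"

text \<open>Faces of dimension j (size j+1), j an integer (j = -1 gives the empty face).\<close>
definition faces_dim :: "nat set set \<Rightarrow> int \<Rightarrow> nat set set" where
  "faces_dim K j = {F\<in>K. int (card F) = j + 1}"

text \<open>Simplicial j-chains with coefficients in the field 'k, faces oriented by the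
natural order on vertices.\<close>
definition chains :: "'k::field itself \<Rightarrow> nat set set \<Rightarrow> int \<Rightarrow> (nat set \<Rightarrow> 'k) set" where
  "chains _ K j = {c. \<forall>F. c F \<noteq> 0 \<longrightarrow> F \<in> faces_dim K j}"

text \<open>Augmented simplicial boundary: the coefficient of G in the boundary of the
oriented simplex G \<union> {v} is (-1)^(number of vertices of G below v).\<close>
definition bd :: "nat set set \<Rightarrow> (nat set \<Rightarrow> 'k::field) \<Rightarrow> nat set \<Rightarrow> 'k" where
  "bd K c G = (\<Sum>v\<in>{v\<in>\<Union>K. v \<notin> G \<and> insert v G \<in> K}.
                 (-1) ^ card {u\<in>G. u < v} * c (insert v G))"

text \<open>Reduced simplicial homology H~_j(K; k) is nonzero: some j-cycle is not a j-boundary.\<close>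
definition rhom_nonzero :: "'k::field itself \<Rightarrow> nat set set \<Rightarrow> int \<Rightarrow> bool" where
  "rhom_nonzero T K j \<longleftrightarrow>
     (\<exists>c\<in>chains T K j. (\<forall>G. bd K c G = 0) \<and>
        \<not> (\<exists>b\<in>chains T K (j + 1). c = bd K b))"

definition maxshift :: "'k::field itself \<Rightarrow> nat \<Rightarrow> nat set set \<Rightarrow> nat \<Rightarrow> nat" where
  "maxshift T n K i = Max {card W | W. W \<subseteq> {1..n} \<and>
        rhom_nonzero T (induced K W) (int (card W) - int i - 1)}"

text \<open>Upper skips: the elements of [n] not among M_1,...,M_(n-d), in increasing order;
upper_skip T n d K j = Q_j.\<close>
definition upper_skips :: "'k::field itself \<Rightarrow> nat \<Rightarrow> nat \<Rightarrow> nat set set \<Rightarrow> nat set" where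
  "upper_skips T n d K = {1..n} - {maxshift T n K i | i. 1 \<le> i \<and> i \<le> n - d}"

definition upper_skip :: "'k::field itself \<Rightarrow> nat \<Rightarrow> nat \<Rightarrow> nat set set \<Rightarrow> nat \<Rightarrow> nat" where
  "upper_skip T n d K j = sorted_list_of_set (upper_skips T n d K) ! j"

end

theory Submission
  imports Defs "HOL-Library.Function_Algebras" "HOL-Library.Indicator_Function"
begin

text \<open>
  Write \<open>q = Q\<^sub>d\<^sub>-\<^sub>1\<close>. If \<open>q \<le> d\<close> the claim follows from \<open>f\<^sub>d\<^sub>-\<^sub>1 \<le> n choose d\<close>.
  Otherwise, since \<open>\<Delta>\<close> has no faces with more than \<open>d\<close> vertices, a nonzero
  \<open>H\<^sub>d\<^sub>-\<^sub>1(\<Delta>[W])\<close> with \<open>|W| = q\<close> would force \<open>M\<^sub>q\<^sub>-\<^sub>d = q\<close>, which is impossible for a skip.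
  So for every \<open>q\<close>-set \<open>W\<close> the facets of \<open>\<Delta>\<close> inside \<open>W\<close> support no nonzero cycle of the full
  simplex on \<open>W\<close>. Fixing \<open>w \<in> W\<close>, the boundary map followed by restriction to the faces
  avoiding \<open>w\<close> is still injective on chains supported on these facets (because \<open>\<partial>\<partial> = 0\<close>),
  and its target has dimension \<open>(q-1) choose (d-1)\<close>. Double counting the pairs
  (facet, \<open>q\<close>-set containing it) gives
  \<open>f\<^sub>d\<^sub>-\<^sub>1 \<cdot> ((n-d) choose (q-d)) \<le> (n choose q) \<cdot> ((q-1) choose (d-1))\<close>, which is the claim.
\<close>

global_interpretation fun_vector: vector_space "\<lambda>(a::'k::field) (f::'a \<Rightarrow> 'k) x. a * f x"
  by unfold_locales (auto simp: fun_eq_iff algebra_simps)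

global_interpretation fun_vector_pair:
  vector_space_pair "\<lambda>(a::'k::field) (f::'a \<Rightarrow> 'k) x. a * f x" "\<lambda>(a::'k::field) (f::'b \<Rightarrow> 'k) x. a * f x"
  by unfold_locales

lemma sum_fun_apply: "(\<Sum>a\<in>A. f a) x = (\<Sum>a\<in>A. f a x)"
  by (induction A rule: infinite_finite_induct) auto

lemma fun_vector_span_indicators_subset:
  "fun_vector.span ((\<lambda>\<sigma>. indicator {\<sigma>}) ` F) \<subseteq> {c :: 'a \<Rightarrow> 'k::field. \<forall>X. c X \<noteq> 0 \<longrightarrow> X \<in> F}"
  by (rule fun_vector.span_minimal) (auto simp: fun_vector.subspace_def indicator_def, metis add_0)

lemma fun_vector_in_span_indicators:
  fixes c :: "'a \<Rightarrow> 'k::field"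
  assumes "finite B" "\<And>X. c X \<noteq> 0 \<Longrightarrow> X \<in> B"
  shows "c \<in> fun_vector.span ((\<lambda>\<sigma>. indicator {\<sigma>}) ` B)"
proof -
  have "c = (\<Sum>\<sigma>\<in>B. (\<lambda>X. c \<sigma> * indicator {\<sigma>} X))"
  proof
    fix X
    have "(\<Sum>\<sigma>\<in>B. c \<sigma> * indicator {\<sigma>} X) = (if X \<in> B then c X else 0)"
      using assms(1) by (simp add: indicator_def if_distrib[of "\<lambda>x. _ * x"] eq_commute[of X] sum.delta)
    then show "c X = (\<Sum>\<sigma>\<in>B. (\<lambda>X. c \<sigma> * indicator {\<sigma>} X)) X"
      using assms(2) by (auto simp: sum_fun_apply)
  qed
  also have "\<dots> \<in> fun_vector.span ((\<lambda>\<sigma>. indicator {\<sigma>}) ` B)"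
    by (intro fun_vector.span_sum fun_vector.span_scale fun_vector.span_base) auto
  finally show ?thesis .
qed

lemma fun_vector_independent_indicators:
  "fun_vector.independent ((\<lambda>\<sigma>. indicator {\<sigma>} :: 'a \<Rightarrow> 'k::field) ` F)"
proof
  assume "fun_vector.dependent ((\<lambda>\<sigma>. indicator {\<sigma>} :: 'a \<Rightarrow> 'k) ` F)"
  then obtain t :: "('a \<Rightarrow> 'k) set" and u v where t: "finite t" "t \<subseteq> (\<lambda>\<sigma>. indicator {\<sigma>}) ` F"
    and sum_eq_0: "(\<Sum>v\<in>t. (\<lambda>x. u v * v x)) = 0" and v: "v \<in> t" "u v \<noteq> 0"
    unfolding fun_vector.dependent_explicit by blast
  obtain \<sigma> :: 'a where \<sigma>: "v = indicator {\<sigma>}"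
    using v t by blast
  have "u v' * v' \<sigma> = 0" if "v' \<in> t - {v}" for v'
    using that t \<sigma> by (auto simp: indicator_def)
  then have "(\<Sum>v'\<in>t. u v' * v' \<sigma>) = (\<Sum>v'\<in>{v}. u v' * v' \<sigma>)"
    using t(1) v(1) by (intro sum.mono_neutral_right) auto
  then show False
    using fun_cong[OF sum_eq_0, of \<sigma>] v \<sigma> by (simp add: sum_fun_apply)
qed

lemma card_le_if_linear_injective_on_supported:
  fixes L :: "('a \<Rightarrow> 'k::field) \<Rightarrow> 'b \<Rightarrow> 'k"
  assumes lin: "Vector_Spaces.linear (\<lambda>a f x. a * f x) (\<lambda>a f x. a * f x) L" and "finite B"
    and inj: "\<And>c. (\<And>X. c X \<noteq> 0 \<Longrightarrow> X \<in> F) \<Longrightarrow> L c = 0 \<Longrightarrow> c = 0"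
    and supp: "\<And>\<sigma> Y. \<sigma> \<in> F \<Longrightarrow> L (indicator {\<sigma>}) Y \<noteq> 0 \<Longrightarrow> Y \<in> B"
  shows "card F \<le> card B"
proof -
  let ?\<delta> = "\<lambda>\<sigma>. indicator {\<sigma>} :: 'a \<Rightarrow> 'k"
  have inj_span: "inj_on L (fun_vector.span (?\<delta> ` F))"
    unfolding fun_vector_pair.linear_inj_on_iff_eq_0[OF lin fun_vector.subspace_span]
  proof (intro ballI impI)
    fix c assume "c \<in> fun_vector.span (?\<delta> ` F)" "L c = 0"
    then show "c = 0"
      using fun_vector_span_indicators_subset[of F] by (intro inj) auto
  qed
  then have indep: "fun_vector.independent (L ` ?\<delta> ` F)"
    by (rule fun_vector_pair.linear_independent_injective_image[OF lin fun_vector_independent_indicators])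
  have inj_L: "inj_on L (?\<delta> ` F)"
    using inj_span fun_vector.span_superset by (rule inj_on_subset)
  have "L ` ?\<delta> ` F \<subseteq> fun_vector.span ((\<lambda>Y. indicator {Y}) ` B)"
    using supp \<open>finite B\<close> by (auto intro: fun_vector_in_span_indicators)
  then have "card (L ` ?\<delta> ` F) \<le> card ((\<lambda>Y. indicator {Y} :: 'b \<Rightarrow> 'k) ` B)"
    using fun_vector.independent_span_bound[OF _ indep] \<open>finite B\<close> by blast
  also have "\<dots> \<le> card B"
    using \<open>finite B\<close> by (rule card_image_le)
  also have "card (L ` ?\<delta> ` F) = card F"
  proof -
    have "inj_on ?\<delta> F"
      by (rule inj_onI) (metis indicator_eq_1_iff singletonD singletonI zero_neq_one)
    then show ?thesis
      using inj_L by (simp add: card_image)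
  qed
  finally show ?thesis .
qed

section \<open>The boundary operator of the full simplex\<close>

text \<open>Pairing \<open>(v, u)\<close> with \<open>(u, v)\<close> through the order, rather than arguing \<open>S = -S\<close>,
  keeps this valid in the presence of 2-torsion (fields of characteristic 2).\<close>

lemma sum_offdiagonal_eq_0_if_antisym:
  fixes g :: "'a::linorder \<Rightarrow> 'a \<Rightarrow> 'b::ab_group_add"
  assumes "finite A" and antisym: "\<And>v u. v \<in> A \<Longrightarrow> u \<in> A \<Longrightarrow> v < u \<Longrightarrow> g v u + g u v = 0"
  shows "(\<Sum>v\<in>A. \<Sum>u\<in>A - {v}. g v u) = 0"
proof -
  have "(\<Sum>u\<in>A - {v}. g v u) = (\<Sum>u\<in>{u\<in>A. u < v}. g v u) + (\<Sum>u\<in>{u\<in>A. v < u}. g v u)" for v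
  proof -
    have "A - {v} = {u\<in>A. u < v} \<union> {u\<in>A. v < u}"
      by auto
    moreover have "sum (g v) ({u\<in>A. u < v} \<union> {u\<in>A. v < u})
        = sum (g v) {u\<in>A. u < v} + sum (g v) {u\<in>A. v < u}"
      using \<open>finite A\<close> by (intro sum.union_disjoint) auto
    ultimately show ?thesis
      by simp
  qed
  then have "(\<Sum>v\<in>A. \<Sum>u\<in>A - {v}. g v u)
      = (\<Sum>v\<in>A. \<Sum>u\<in>{u\<in>A. u < v}. g v u) + (\<Sum>v\<in>A. \<Sum>u\<in>{u\<in>A. v < u}. g v u)"
    by (simp add: sum.distrib)
  also have "(\<Sum>v\<in>A. \<Sum>u\<in>{u\<in>A. u < v}. g v u) = (\<Sum>v\<in>A. \<Sum>u\<in>{u\<in>A. v < u}. g u v)"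
    using \<open>finite A\<close> by (intro sum.swap_restrict)
  also have "\<dots> + (\<Sum>v\<in>A. \<Sum>u\<in>{u\<in>A. v < u}. g v u) = 0"
    using antisym by (simp add: sum.distrib[symmetric] add.commute)
  finally show ?thesis .
qed

definition orientation_sign :: "nat \<Rightarrow> nat set \<Rightarrow> 'k::field" where
  "orientation_sign v G = (-1) ^ card {u\<in>G. u < v}"

definition simplex_boundary :: "nat set \<Rightarrow> (nat set \<Rightarrow> 'k::field) \<Rightarrow> nat set \<Rightarrow> 'k" where
  "simplex_boundary W c G = (\<Sum>v\<in>W - G. orientation_sign v G * c (insert v G))"

lemma orientation_sign_nonzero: "orientation_sign v G \<noteq> (0::'k::field)"
  by (simp add: orientation_sign_def)

lemma orientation_sign_swap:
  assumes "v < u" "v \<notin> G" "u \<notin> G"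
  shows "orientation_sign v G * orientation_sign u (insert v G)
       + orientation_sign u G * orientation_sign v (insert u G) = (0::'k::field)"
proof -
  have "finite {x\<in>G. x < u}"
    by (rule finite_subset[of _ "{..<u}"]) auto
  moreover have "{x\<in>insert v G. x < u} = insert v {x\<in>G. x < u}" "{x\<in>insert u G. x < v} = {x\<in>G. x < v}"
    using assms by auto
  ultimately show ?thesis
    using assms by (simp add: orientation_sign_def)
qed

lemma simplex_boundary_boundary:
  assumes "finite W"
  shows "simplex_boundary W (simplex_boundary W c) G = (0::'k::field)"
proof -
  have "simplex_boundary W (simplex_boundary W c) G
      = (\<Sum>v\<in>W - G. \<Sum>u\<in>W - G - {v}. orientation_sign v G * orientation_sign u (insert v G)
                                            * c (insert u (insert v G)))"
  proof -
    have "W - insert v G = W - G - {v}" for v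
      by auto
    then show ?thesis
      unfolding simplex_boundary_def by (simp add: sum_distrib_left mult.assoc)
  qed
  also have "\<dots> = 0"
  proof (rule sum_offdiagonal_eq_0_if_antisym)
    fix v u assume "v \<in> W - G" "u \<in> W - G" "v < u"
    moreover have "insert v (insert u G) = insert u (insert v G)"
      by auto
    ultimately show "orientation_sign v G * orientation_sign u (insert v G) * c (insert u (insert v G))
        + orientation_sign u G * orientation_sign v (insert u G) * c (insert v (insert u G)) = (0::'k)"
      using orientation_sign_swap[of v u G, where 'k='k] by (simp add: distrib_right[symmetric])
  qed (use assms in auto)
  finally show ?thesis .
qed

lemma simplex_boundary_eq_0_if_eq_0_avoiding:
  fixes c :: "nat set \<Rightarrow> 'k::field"
  assumes "finite W" "w \<in> W" and avoiding: "\<And>G. w \<notin> G \<Longrightarrow> simplex_boundary W c G = 0"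
  shows "simplex_boundary W c H = 0"
proof (cases "w \<in> H")
  case True
  \<comment> \<open>In \<open>\<partial>\<partial>c = 0\<close> at \<open>H - {w}\<close> every term except the one for \<open>w\<close> vanishes by hypothesis.\<close>
  define G where "G = H - {w}"
  have "0 = simplex_boundary W (simplex_boundary W c) G"
    using simplex_boundary_boundary[OF \<open>finite W\<close>] by simp
  also have "\<dots> = orientation_sign w G * simplex_boundary W c H
      + (\<Sum>v\<in>W - G - {w}. orientation_sign v G * simplex_boundary W c (insert v G))"
  proof -
    have "w \<in> W - G" "insert w G = H"
      using \<open>w \<in> W\<close> True by (auto simp: G_def)
    then show ?thesis
      unfolding simplex_boundary_def[of W "simplex_boundary W c"]
      using \<open>finite W\<close> by (simp add: sum.remove)
  qed
  also have "(\<Sum>v\<in>W - G - {w}. orientation_sign v G * simplex_boundary W c (insert v G)) = 0"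
    by (rule sum.neutral) (auto simp: G_def intro!: avoiding)
  finally show ?thesis
    using orientation_sign_nonzero[where 'k='k] by simp
qed (rule avoiding)

lemma card_acyclic_faces_le:
  fixes F :: "nat set set"
  assumes "finite W" "w \<in> W" and faces: "\<And>\<sigma>. \<sigma> \<in> F \<Longrightarrow> \<sigma> \<subseteq> W \<and> card \<sigma> = d"
    and acyclic: "\<And>c :: nat set \<Rightarrow> 'k::field.
                   (\<And>X. c X \<noteq> 0 \<Longrightarrow> X \<in> F) \<Longrightarrow> simplex_boundary W c = 0 \<Longrightarrow> c = 0"
  shows "card F \<le> (card W - 1) choose (d - 1)"
proof -
  define L :: "(nat set \<Rightarrow> 'k) \<Rightarrow> nat set \<Rightarrow> 'k" where
    "L c G = (if w \<in> G then 0 else simplex_boundary W c G)" for c G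
  define B where "B = {G. G \<subseteq> W - {w} \<and> card G = d - 1}"
  have "card F \<le> card B"
  proof (rule card_le_if_linear_injective_on_supported)
    show "Vector_Spaces.linear (\<lambda>a f x. a * f x) (\<lambda>a f x. a * f x) L"
      unfolding Vector_Spaces.linear_iff L_def simplex_boundary_def
      by (auto simp: fun_vector.vector_space_axioms fun_eq_iff sum.distrib sum_distrib_left algebra_simps)
    show "finite B"
      unfolding B_def using \<open>finite W\<close> by simp
    show "c = 0" if supp: "\<And>X. c X \<noteq> 0 \<Longrightarrow> X \<in> F" and "L c = 0" for c
    proof (rule acyclic[OF supp])
      have "simplex_boundary W c H = 0" for H
        using \<open>finite W\<close> \<open>w \<in> W\<close>
        by (rule simplex_boundary_eq_0_if_eq_0_avoiding)
           (use fun_cong[OF \<open>L c = 0\<close>] in \<open>metis L_def zero_fun_def\<close>)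
      then show "simplex_boundary W c = 0"
        by (simp add: fun_eq_iff)
    qed
    show "G \<in> B" if "\<sigma> \<in> F" and nonzero: "L (indicator {\<sigma>}) G \<noteq> 0" for \<sigma> G
    proof -
      have "w \<notin> G"
        using nonzero by (auto simp: L_def)
      then have "(\<Sum>v\<in>W - G. orientation_sign v G * indicator {\<sigma>} (insert v G)) \<noteq> (0::'k)"
        using nonzero by (simp add: L_def simplex_boundary_def)
      then obtain v where "v \<in> W - G" "orientation_sign v G * indicator {\<sigma>} (insert v G) \<noteq> (0::'k)"
        by (rule sum.not_neutral_contains_not_neutral)
      moreover from this(2) have "insert v G = \<sigma>"
        by (simp add: indicator_def)
      moreover have "G \<subseteq> W"
        using \<open>insert v G = \<sigma>\<close> faces[OF \<open>\<sigma> \<in> F\<close>] by blast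
      moreover from this have "card \<sigma> = Suc (card G)"
        using \<open>insert v G = \<sigma>\<close> \<open>v \<in> W - G\<close> \<open>finite W\<close> by (metis DiffD2 card_insert_disjoint finite_subset)
      ultimately show ?thesis
        using faces[OF \<open>\<sigma> \<in> F\<close>] \<open>w \<notin> G\<close> unfolding B_def by auto
    qed
  qed
  also have "card B = (card W - 1) choose (d - 1)"
    unfolding B_def using \<open>finite W\<close> \<open>w \<in> W\<close> by (simp add: n_subsets)
  finally show ?thesis .
qed

section \<open>Homology of induced subcomplexes in the top dimension\<close>

lemma bd_induced_eq_simplex_boundary:
  assumes "c \<in> chains T (induced K W) j" "finite W"
  shows "bd (induced K W) c = simplex_boundary W c"
proof
  fix G
  let ?K = "induced K W"
  have "{v\<in>\<Union>?K. v \<notin> G \<and> insert v G \<in> ?K} = {v\<in>W - G. insert v G \<in> ?K}"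
    unfolding induced_def by auto
  then have "bd ?K c G = (\<Sum>v\<in>{v\<in>W - G. insert v G \<in> ?K}. orientation_sign v G * c (insert v G))"
    unfolding bd_def orientation_sign_def by simp
  also have "\<dots> = simplex_boundary W c G"
    unfolding simplex_boundary_def
    by (rule sum.mono_neutral_left) (use assms in \<open>auto simp: chains_def faces_dim_def\<close>)
  finally show "bd ?K c G = simplex_boundary W c G" .
qed

lemma chains_eq_0_above_dim:
  assumes "\<forall>F\<in>K. card F \<le> d" "int d \<le> j" "c \<in> chains T K j"
  shows "c = 0"
proof
  fix F show "c F = 0 F"
    using assms unfolding chains_def faces_dim_def by force
qed

lemma bd_0: "bd K 0 = (0 :: nat set \<Rightarrow> 'k::field)"
  by (simp add: bd_def fun_eq_iff)

lemma not_rhom_nonzero_above_dim: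
  assumes "\<forall>F\<in>K. card F \<le> d" "int d \<le> j"
  shows "\<not> rhom_nonzero T K j"
proof
  assume "rhom_nonzero T K j"
  then obtain c where "c \<in> chains T K j" "\<not> (\<exists>b\<in>chains T K (j + 1). c = bd K b)"
    unfolding rhom_nonzero_def by blast
  moreover have "0 \<in> chains T K (j + 1)"
    by (simp add: chains_def)
  ultimately show False
    using chains_eq_0_above_dim[OF assms] bd_0 by metis
qed

lemma top_cycle_eq_0_if_not_rhom_nonzero:
  assumes "\<forall>F\<in>K. card F \<le> d" "\<not> rhom_nonzero T K (int d - 1)"
    and "c \<in> chains T K (int d - 1)" "bd K c = 0"
  shows "c = 0"
proof -
  obtain b where "b \<in> chains T K (int d - 1 + 1)" "c = bd K b"
    using assms(2-4) unfolding rhom_nonzero_def by (auto simp: fun_eq_iff)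
  moreover from this(1) have "b = 0"
    by (intro chains_eq_0_above_dim[OF assms(1)]) auto
  ultimately show ?thesis
    using bd_0 by simp
qed

lemma card_top_faces_le_if_not_rhom_nonzero:
  fixes T :: "'k::field itself"
  assumes "\<forall>F\<in>K. card F \<le> d" "finite W" "W \<noteq> {}"
    and "\<not> rhom_nonzero T (induced K W) (int d - 1)"
  shows "card {F\<in>K. card F = d \<and> F \<subseteq> W} \<le> (card W - 1) choose (d - 1)"
proof -
  obtain w where "w \<in> W"
    using \<open>W \<noteq> {}\<close> by blast
  show ?thesis
  proof (rule card_acyclic_faces_le[OF \<open>finite W\<close> \<open>w \<in> W\<close>, where 'k='k])
    fix c :: "nat set \<Rightarrow> 'k"
    assume "\<And>X. c X \<noteq> 0 \<Longrightarrow> X \<in> {F\<in>K. card F = d \<and> F \<subseteq> W}" "simplex_boundary W c = 0"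
    moreover from this have chain: "c \<in> chains T (induced K W) (int d - 1)"
      unfolding chains_def faces_dim_def induced_def by auto
    ultimately show "c = 0"
      using assms(1,2,4) bd_induced_eq_simplex_boundary[OF chain]
      by (intro top_cycle_eq_0_if_not_rhom_nonzero[OF _ _ chain]) (auto simp: induced_def)
  qed auto
qed

section \<open>Maximal shifts and upper skips\<close>

lemma maxshift_eq_if_top_rhom_nonzero:
  assumes "\<forall>F\<in>K. card F \<le> d" "d < q" "W \<subseteq> {1..n}" "card W = q"
    and "rhom_nonzero T (induced K W) (int d - 1)"
  shows "maxshift T n K (q - d) = q"
proof -
  define S where "S = {card W | W. W \<subseteq> {1..n} \<and> rhom_nonzero T (induced K W) (int (card W) - int (q - d) - 1)}"
  have "int (card W) - int (q - d) - 1 = int d - 1"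
    using assms(2,4) by simp
  then have "q \<in> S"
    unfolding S_def using assms(3-5) by (intro CollectI exI[of _ W]) simp
  moreover have "s \<le> q" if "s \<in> S" for s
  proof (rule ccontr)
    assume "\<not> s \<le> q"
    obtain W' where W': "s = card W'" "rhom_nonzero T (induced K W') (int (card W') - int (q - d) - 1)"
      using \<open>s \<in> S\<close> unfolding S_def by blast
    have "\<forall>F\<in>induced K W'. card F \<le> d"
      using assms(1) unfolding induced_def by simp
    moreover have "int d \<le> int (card W') - int (q - d) - 1"
      using \<open>\<not> s \<le> q\<close> \<open>d < q\<close> W'(1) by linarith
    ultimately show False
      using not_rhom_nonzero_above_dim W'(2) by blast
  qed
  ultimately have "Max S = q"
    by (intro Max_eqI finite_subset[of S "{..q}"]) auto
  then show ?thesis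
    unfolding maxshift_def S_def .
qed

lemma not_top_rhom_nonzero_if_upper_skip:
  assumes "\<forall>F\<in>K. card F \<le> d" "d < q" "q \<le> n" "q \<in> upper_skips T n d K"
    and "W \<subseteq> {1..n}" "card W = q"
  shows "\<not> rhom_nonzero T (induced K W) (int d - 1)"
proof
  assume "rhom_nonzero T (induced K W) (int d - 1)"
  then have "maxshift T n K (q - d) = q"
    using assms by (intro maxshift_eq_if_top_rhom_nonzero)
  moreover have "1 \<le> q - d" "q - d \<le> n - d"
    using assms(2,3) by auto
  ultimately show False
    using assms(4) unfolding upper_skips_def by (metis (mono_tags, lifting) DiffD2 mem_Collect_eq)
qed

lemma upper_skip_in_upper_skips:
  assumes "j < d" "d \<le> n"
  shows "upper_skip T n d K j \<in> upper_skips T n d K"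
proof -
  let ?M = "{maxshift T n K i | i. 1 \<le> i \<and> i \<le> n - d}"
  have "?M = maxshift T n K ` {1..n - d}"
    by auto
  then have "card ?M \<le> n - d"
    using card_image_le[of "{1..n - d}" "maxshift T n K"] by simp
  moreover have "card {1..n} - card ?M \<le> card (upper_skips T n d K)"
    unfolding upper_skips_def \<open>?M = _\<close> by (rule diff_card_le_card_Diff) simp
  ultimately have "j < length (sorted_list_of_set (upper_skips T n d K))"
    using assms by simp
  moreover have "finite (upper_skips T n d K)"
    unfolding upper_skips_def by simp
  ultimately show ?thesis
    unfolding upper_skip_def by (metis nth_mem set_sorted_list_of_set)
qed

section \<open>Counting top faces\<close>

lemma card_supersets_of_card:
  assumes "finite S" "F \<subseteq> S" "card F = d" "d \<le> q"
  shows "card {W. W \<subseteq> S \<and> card W = q \<and> F \<subseteq> W} = (card S - d) choose (q - d)"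
proof -
  have "finite F"
    using assms(1,2) finite_subset by blast
  have "bij_betw (\<lambda>B. B \<union> F) {B. B \<subseteq> S - F \<and> card B = q - d} {W. W \<subseteq> S \<and> card W = q \<and> F \<subseteq> W}"
  proof (rule bij_betw_byWitness[where f' = "\<lambda>W. W - F"])
    show "(\<lambda>B. B \<union> F) ` {B. B \<subseteq> S - F \<and> card B = q - d} \<subseteq> {W. W \<subseteq> S \<and> card W = q \<and> F \<subseteq> W}"
    proof (rule image_subsetI, clarify)
      fix B assume "B \<subseteq> S - F" "card B = q - d"
      moreover from this(1) have "finite B"
        using \<open>finite S\<close> by (meson finite_Diff finite_subset)
      moreover have "B \<inter> F = {}"
        using \<open>B \<subseteq> S - F\<close> by blast
      ultimately show "B \<union> F \<subseteq> S \<and> card (B \<union> F) = q \<and> F \<subseteq> B \<union> F"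
        using assms \<open>finite F\<close> by (auto simp: card_Un_disjoint)
    qed
    show "(\<lambda>W. W - F) ` {W. W \<subseteq> S \<and> card W = q \<and> F \<subseteq> W} \<subseteq> {B. B \<subseteq> S - F \<and> card B = q - d}"
      using assms \<open>finite F\<close> by (auto simp: card_Diff_subset finite_subset)
  qed auto
  then have "card {W. W \<subseteq> S \<and> card W = q \<and> F \<subseteq> W} = card {B. B \<subseteq> S - F \<and> card B = q - d}"
    by (simp add: bij_betw_same_card)
  also have "\<dots> = (card S - d) choose (q - d)"
    using assms \<open>finite F\<close> by (simp add: n_subsets card_Diff_subset)
  finally show ?thesis .
qed

lemma card_mult_choose_le_by_double_counting:
  assumes "finite S" "\<And>F. F \<in> A \<Longrightarrow> F \<subseteq> S \<and> card F = d" "d \<le> q"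
    and "\<And>W. W \<subseteq> S \<Longrightarrow> card W = q \<Longrightarrow> card {F\<in>A. F \<subseteq> W} \<le> m"
  shows "card A * ((card S - d) choose (q - d)) \<le> (card S choose q) * m"
proof -
  define Ws where "Ws = {W. W \<subseteq> S \<and> card W = q}"
  have "A \<subseteq> Pow S" "Ws \<subseteq> Pow S"
    using assms(2) unfolding Ws_def by blast+
  then have "finite A" "finite Ws"
    using \<open>finite S\<close> by (meson finite_Pow_iff finite_subset)+
  have "card {W\<in>Ws. F \<subseteq> W} = (card S - d) choose (q - d)" if "F \<in> A" for F
  proof -
    have "{W\<in>Ws. F \<subseteq> W} = {W. W \<subseteq> S \<and> card W = q \<and> F \<subseteq> W}"
      unfolding Ws_def by blast
    then show ?thesis
      using card_supersets_of_card[OF \<open>finite S\<close>] assms(2)[OF that] \<open>d \<le> q\<close> by simp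
  qed
  then have "card A * ((card S - d) choose (q - d)) = (\<Sum>F\<in>A. \<Sum>W\<in>{W\<in>Ws. F \<subseteq> W}. 1)"
    by simp
  also have "\<dots> = (\<Sum>W\<in>Ws. \<Sum>F\<in>{F\<in>A. F \<subseteq> W}. 1)"
    using \<open>finite A\<close> \<open>finite Ws\<close> by (rule sum.swap_restrict)
  also have "\<dots> \<le> (\<Sum>W\<in>Ws. m)"
    by (rule sum_mono) (simp add: Ws_def assms(4))
  also have "\<dots> = (card S choose q) * m"
    using \<open>finite S\<close> by (simp add: Ws_def n_subsets)
  finally show ?thesis .
qed

lemma le_div_mult_choose_if_double_counting_bound:
  assumes "1 \<le> d" "d < q" "q \<le> n"
    and "a * ((n - d) choose (q - d)) \<le> (n choose q) * ((q - 1) choose (d - 1))"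
  shows "real a \<le> real d / real q * real (n choose d)"
proof -
  have "a * ((n - d) choose (q - d)) * q \<le> (n choose q) * (q * ((q - 1) choose (d - 1)))"
    using assms(4) by simp
  also have "\<dots> = d * ((n choose q) * (q choose d))"
    using times_binomial_minus1_eq[of d q] assms(1) by simp
  also have "\<dots> = d * (n choose d) * ((n - d) choose (q - d))"
    using choose_mult[of d q n] assms(2,3) by simp
  finally have "(a * q) * ((n - d) choose (q - d)) \<le> (d * (n choose d)) * ((n - d) choose (q - d))"
    by (simp add: mult_ac)
  then have "a * q \<le> d * (n choose d)"
    using assms(2,3) by simp
  then have "real a * real q \<le> real d * real (n choose d)"
    by (metis of_nat_le_iff of_nat_mult)
  then show ?thesis
    using assms(2) by (simp add: field_simps)
qed

lemma card_faces_of_card_le_choose: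
  assumes "K \<subseteq> Pow {1..n}"
  shows "card {F\<in>K. card F = d} \<le> n choose d"
proof -
  have "card {F\<in>K. card F = d} \<le> card {F. F \<subseteq> {1..n} \<and> card F = d}"
    using assms by (intro card_mono) auto
  then show ?thesis
    by (simp add: n_subsets)
qed

lemma simplicial_complex_Max_card:
  assumes "simplicial_complex n K" "1 \<le> n" "d = Max (card ` K)"
  shows "\<forall>F\<in>K. card F \<le> d" "1 \<le> d" "d \<le> n"
proof -
  have K: "K \<subseteq> Pow {1..n}" "{1} \<in> K"
    using assms(1,2) unfolding simplicial_complex_def by auto
  then have "finite (card ` K)"
    by (meson finite_Pow_iff finite_atLeastAtMost finite_imageI finite_subset)
  then show "\<forall>F\<in>K. card F \<le> d"
    using assms(3) by simp
  show "1 \<le> d"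
    using Max_ge[OF \<open>finite (card ` K)\<close> imageI[OF \<open>{1} \<in> K\<close>]] assms(3) by simp
  obtain F where "F \<in> K" "d = card F"
    using Max_in[OF \<open>finite (card ` K)\<close>] \<open>{1} \<in> K\<close> assms(3) by blast
  then show "d \<le> n"
    using K(1) card_mono[of "{1..n}" F] by auto
qed

lemma card_top_faces_in_le_if_upper_skip:
  fixes T :: "'k::field itself"
  assumes "\<forall>F\<in>K. card F \<le> d" "d < q" "q \<le> n" "q \<in> upper_skips T n d K"
    and "W \<subseteq> {1..n}" "card W = q"
  shows "card {F \<in> {F\<in>K. card F = d}. F \<subseteq> W} \<le> (q - 1) choose (d - 1)"
proof -
  have "finite W" "W \<noteq> {}"
    using assms(2,5,6) finite_subset by fastforce+
  moreover have "{F \<in> {F\<in>K. card F = d}. F \<subseteq> W} = {F\<in>K. card F = d \<and> F \<subseteq> W}"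
    by blast
  ultimately show ?thesis
    using card_top_faces_le_if_not_rhom_nonzero[OF assms(1) _ _ not_top_rhom_nonzero_if_upper_skip[OF assms]]
      assms(6) by simp
qed

lemma card_top_faces_le_if_upper_skip:
  fixes T :: "'k::field itself"
  assumes "K \<subseteq> Pow {1..n}" "\<forall>F\<in>K. card F \<le> d" "1 \<le> d" "d < q" "q \<le> n"
    and "q \<in> upper_skips T n d K"
  shows "real (card {F\<in>K. card F = d}) \<le> real d / real q * real (n choose d)"
proof (rule le_div_mult_choose_if_double_counting_bound)
  have "card {F\<in>K. card F = d} * ((card {1..n} - d) choose (q - d))
      \<le> (card {1..n} choose q) * ((q - 1) choose (d - 1))"
  proof (rule card_mult_choose_le_by_double_counting)
    show "F \<subseteq> {1..n} \<and> card F = d" if "F \<in> {F\<in>K. card F = d}" for F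
      using that assms(1) by blast
    show "card {F \<in> {F\<in>K. card F = d}. F \<subseteq> W} \<le> (q - 1) choose (d - 1)"
      if "W \<subseteq> {1..n}" "card W = q" for W
      using card_top_faces_in_le_if_upper_skip[OF assms(2,4-6) that] .
  qed (use assms(4) in auto)
  then show "card {F\<in>K. card F = d} * ((n - d) choose (q - d)) \<le> (n choose q) * ((q - 1) choose (d - 1))"
    by simp
qed (use assms in auto)

theorem lemma4p7:
  fixes K :: "nat set set" and n d :: nat
  assumes "simplicial_complex n K"
    and "1 \<le> n"
    and "d = Max (card ` K)"
  shows "real (fvec K (d - 1))
           \<le> real d / real (upper_skip TYPE('k::field) n d K (d - 1)) * real (n choose d)"
proof -
  have K: "K \<subseteq> Pow {1..n}"
    using assms(1) by (simp add: simplicial_complex_def)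
  note d = simplicial_complex_Max_card[OF assms]
  define q where "q = upper_skip TYPE('k) n d K (d - 1)"
  have q: "q \<in> upper_skips TYPE('k) n d K"
    unfolding q_def by (rule upper_skip_in_upper_skips) (use d in linarith)+
  then have "q \<in> {1..n}"
    unfolding upper_skips_def by (rule DiffD1)
  have fvec: "fvec K (d - 1) = card {F\<in>K. card F = d}"
    unfolding fvec_def using d(2) by simp
  show ?thesis
  proof (cases "q \<le> d")
    case True
    then have "1 \<le> real d / real q"
      using \<open>q \<in> {1..n}\<close> by simp
    then show ?thesis
      using card_faces_of_card_le_choose[OF K, of d] mult_right_mono[of 1 "real d / real q" "real (n choose d)"]
      unfolding fvec q_def by simp
  next
    case False
    then show ?thesis
      using card_top_faces_le_if_upper_skip[OF K d(1,2) _ _ q] \<open>q \<in> {1..n}\<close> unfolding fvec q_def by simp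
  qed
qed

end
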